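(* There is no matching algorithm that is both incentive compatible with rationality (IC-R) and $\alpha$-optimal for some $\alpha>0$, even when the number of features is $|F|=2$.
   Context: An instance consists of: a set $N$ of students; a set $M$ of colleges, each college $c$ with positive integer capacity $x_c$ and strict preference $\succ_c$ over $N$; a finite set $F$ of features; for each student $s$ and feature $f$ a utility function $u_s^f:M\to[0,1]$; for each student $s$ a probability distribution $\mu_s$ over weight vectors $w_s=(w_s^f)_{f\in F}$ with $w_s^f\ge0$, $\sum_f w_s^f=1$, independent across students. Every college is acceptable to every student and vice versa. For realized $w_s$, $c\succeq_s^{w_s}c'$ iff $\sum_f w_s^fu_s^f(c)\ge\sum_f w_s^fu_s^f(c')$, strict version $\succ_s^{w_s}$; $\mathsf{null}$ (unmatched) is ranked below any college. A matching $\pi$ gives each student at most one college and each college $c$ a set $\pi(c)$ of at most $x_c$ students. Given realized weights, $\pi$ is (weakly) stable if there is no pair $(s,c)$ with $c\succ_s^{w_s}\pi(s)$ and either $|\pi(c)|<x_c$ or some $s'\in\pi(c)$ with $s\succ_c s'$. $\mathsf{ProS}(\pi;\mathcal I)$ is the probability over independent $w_s\sim\mu_s$ that $\pi$ is stable. A matching algorithm $\mathsf{Alg}$ is $\alpha$-optimal if $\inf_{\mathcal I}\mathsf{ProS}(\mathsf{Alg}(\mathcal I);\mathcal I)/\max_\pi\mathsf{ProS}(\pi;\mathcal I)\ge\alpha$. Each student $s$ may misreport $(u_s',\mu_s')$ in place of her true $(\{u_s^f\},\mu_s)$; let $\pi(s)$, $\pi'(s)$ be her assignments under truthful report and misreport.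 The algorithm is IC-R if $\Pr[\pi'(s)\succ_s^{w_s}\pi(s)]>1/2$ never occurs (probability over her true $w_s\sim\mu_s$, with true utilities), for any instance, student and misreport. *)

theory Defs
  imports "HOL-Probability.Probability"
begin

record 'f inst =
  stu   :: "nat set"
  col   :: "nat set"
  cap   :: "nat \<Rightarrow> nat"
  cpref :: "nat \<Rightarrow> nat \<Rightarrow> nat \<Rightarrow> bool"  \<comment> \<open>cpref c s s' : s strictly preferred to s' by c\<close>
  util  :: "nat \<Rightarrow> 'f \<Rightarrow> nat \<Rightarrow> real"
  dist  :: "nat \<Rightarrow> (real^'f) measure"

definition wsimplex :: "(real^'f::finite) set" where
  "wsimplex = {w. (\<forall>f. 0 \<le> w $ f) \<and> (\<Sum>f\<in>UNIV. w $ f) = 1}"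

definition valid_dist :: "(real^'f::finite) measure \<Rightarrow> bool" where
  "valid_dist \<mu> \<longleftrightarrow> prob_space \<mu> \<and> sets \<mu> = sets borel \<and> (AE w in \<mu>. w \<in> wsimplex)"

definition strict_total_on :: "nat set \<Rightarrow> (nat \<Rightarrow> nat \<Rightarrow> bool) \<Rightarrow> bool" where
  "strict_total_on A r \<longleftrightarrow>
     (\<forall>a\<in>A. \<not> r a a) \<and>
     (\<forall>a\<in>A. \<forall>b\<in>A. \<forall>c\<in>A. r a b \<longrightarrow> r b c \<longrightarrow> r a c) \<and>
     (\<forall>a\<in>A. \<forall>b\<in>A. a \<noteq> b \<longrightarrow> r a b \<or> r b a)"

definition valid_utils :: "nat set \<Rightarrow> ('f \<Rightarrow> nat \<Rightarrow> real) \<Rightarrow> bool" where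
  "valid_utils M u \<longleftrightarrow> (\<forall>f. \<forall>c\<in>M. 0 \<le> u f c \<and> u f c \<le> 1)"

definition wf_inst :: "('f::finite) inst \<Rightarrow> bool" where
  "wf_inst I \<longleftrightarrow>
     finite (stu I) \<and> finite (col I) \<and>
     (\<forall>c\<in>col I. cap I c > 0) \<and>
     (\<forall>c\<in>col I. strict_total_on (stu I) (cpref I c)) \<and>
     (\<forall>s\<in>stu I. valid_utils (col I) (util I s)) \<and>
     (\<forall>s\<in>stu I. valid_dist (dist I s))"

text \<open>A matching: \<pi> s = None means s is unmatched (null).\<close>
definition matching :: "('f::finite) inst \<Rightarrow> (nat \<Rightarrow> nat option) \<Rightarrow> bool" where
  "matching I \<pi> \<longleftrightarrow>
     (\<forall>s. s \<notin> stu I \<longrightarrow> \<pi> s = None) \<and>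
     (\<forall>s\<in>stu I. \<forall>c. \<pi> s = Some c \<longrightarrow> c \<in> col I) \<and>
     (\<forall>c\<in>col I. card {s\<in>stu I. \<pi> s = Some c} \<le> cap I c)"

definition assigned :: "('f::finite) inst \<Rightarrow> (nat \<Rightarrow> nat option) \<Rightarrow> nat \<Rightarrow> nat set" where
  "assigned I \<pi> c = {s\<in>stu I. \<pi> s = Some c}"

definition val :: "('f::finite \<Rightarrow> nat \<Rightarrow> real) \<Rightarrow> real^'f \<Rightarrow> nat \<Rightarrow> real" where
  "val u w c = (\<Sum>f\<in>UNIV. w $ f * u f c)"

definition sprefers :: "('f::finite \<Rightarrow> nat \<Rightarrow> real) \<Rightarrow> real^'f \<Rightarrow> nat option \<Rightarrow> nat option \<Rightarrow> bool" where
  "sprefers u w a b =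
     (case a of None \<Rightarrow> False
      | Some c \<Rightarrow> (case b of None \<Rightarrow> True | Some c' \<Rightarrow> val u w c > val u w c'))"

definition stable :: "('f::finite) inst \<Rightarrow> (nat \<Rightarrow> nat option) \<Rightarrow> (nat \<Rightarrow> real^'f) \<Rightarrow> bool" where
  "stable I \<pi> w \<longleftrightarrow>
     \<not> (\<exists>s\<in>stu I. \<exists>c\<in>col I.
          sprefers (util I s) (w s) (Some c) (\<pi> s) \<and>
          (card (assigned I \<pi> c) < cap I c \<or> (\<exists>s'\<in>assigned I \<pi> c. cpref I c s s')))"

definition weight_space :: "('f::finite) inst \<Rightarrow> (nat \<Rightarrow> real^'f) measure" where
  "weight_space I = PiM (stu I) (dist I)"

definition ProS :: "(nat \<Rightarrow> nat option) \<Rightarrow> ('f::finite) inst \<Rightarrow> real" where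
  "ProS \<pi> I = measure (weight_space I) {w \<in> space (weight_space I). stable I \<pi> w}"

definition matching_algorithm :: "(('f::finite) inst \<Rightarrow> (nat \<Rightarrow> nat option)) \<Rightarrow> bool" where
  "matching_algorithm Alg \<longleftrightarrow> (\<forall>I. wf_inst I \<longrightarrow> matching I (Alg I))"

definition alpha_optimal :: "(('f::finite) inst \<Rightarrow> (nat \<Rightarrow> nat option)) \<Rightarrow> real \<Rightarrow> bool" where
  "alpha_optimal Alg \<alpha> \<longleftrightarrow>
     (\<forall>I. wf_inst I \<longrightarrow> \<alpha> \<le> ProS (Alg I) I / Max ((\<lambda>\<pi>. ProS \<pi> I) ` {\<pi>. matching I \<pi>}))"

definition misreport :: "('f::finite) inst \<Rightarrow> nat \<Rightarrow> ('f \<Rightarrow> nat \<Rightarrow> real) \<Rightarrow> (real^'f) measure \<Rightarrow> 'f inst" where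
  "misreport I s u' \<mu>' = I\<lparr>util := (util I)(s := u'), dist := (dist I)(s := \<mu>')\<rparr>"

definition IC_R :: "(('f::finite) inst \<Rightarrow> (nat \<Rightarrow> nat option)) \<Rightarrow> bool" where
  "IC_R Alg \<longleftrightarrow>
     (\<forall>I s u' \<mu>'. wf_inst I \<longrightarrow> s \<in> stu I \<longrightarrow> valid_utils (col I) u' \<longrightarrow> valid_dist \<mu>' \<longrightarrow>
        \<not> (measure (dist I s)
              {w \<in> space (dist I s).
                 sprefers (util I s) w (Alg (misreport I s u' \<mu>') s) (Alg I s)} > 1/2))"

end

theory Submission
  imports Defs
begin

(* One student, three colleges of capacity one, two features.  College 1 serves only the first
   feature, college 3 only the second, and college 2 is a compromise worth 3/4 on both, so with
   weight t on the first feature the colleges are worth t, 3/4 and 1 - t.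
   If the student reports weight 1/2 with certainty, only college 2 is ever stable, so an
   alpha-optimal algorithm must give her college 2.  Under her true polarized distribution
   (t = 1 and t = 0 with probability (1 - e)/2 each, t = 1/2 with probability e) college 2 beats
   every other outcome with probability above 1/2, so IC-R forces college 2 under truthful
   reporting as well.  That assignment is stable only with probability e, while college 1 is
   stable with probability (1 - e)/2, which contradicts alpha-optimality once e is small. *)

lemma pred_sprefers: "Measurable.pred borel (\<lambda>w. sprefers u w x y)"
  unfolding sprefers_def val_def by (cases x; cases y) (simp_all, measurable)

definition unblocked :: "('f::finite \<Rightarrow> nat \<Rightarrow> real) \<Rightarrow> nat set \<Rightarrow> nat option \<Rightarrow> (real^'f) set" where
  "unblocked u M x = {w. \<forall>c\<in>M. \<not> sprefers u w (Some c) x}"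

lemma unblocked_in_borel:
  assumes "finite M"
  shows "unblocked u M x \<in> sets borel"
  unfolding unblocked_def using assms pred_sprefers by measurable

lemma stable_single_student_iff:
  assumes "stu J = {s}" "\<forall>c\<in>col J. 0 < cap J c"
  shows "stable J \<pi> w \<longleftrightarrow> w s \<in> unblocked (util J s) (col J) (\<pi> s)"
proof -
  have "assigned J \<pi> c = (if \<pi> s = Some c then {s} else {})" for c
    using assms(1) by (auto simp: assigned_def)
  then show ?thesis
    using assms by (auto simp: stable_def unblocked_def sprefers_def split: option.splits)
qed

lemma ProS_single_student:
  assumes "wf_inst J" "stu J = {s}"
  shows "ProS \<pi> J = measure (dist J s) (unblocked (util J s) (col J) (\<pi> s))"
proof -
  let ?P = "PiM {s} (dist J)" and ?U = "unblocked (util J s) (col J) (\<pi> s)"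
  have valid: "valid_dist (dist J s)" and "finite (col J)"
    using assms by (auto simp: wf_inst_def)
  then have U: "?U \<in> sets (dist J s)"
    by (simp add: valid_dist_def unblocked_in_borel)
  have "ProS \<pi> J = measure ?P ((\<lambda>x. x s) -` ?U \<inter> space ?P)"
    using assms stable_single_student_iff[of J s]
    by (auto simp: ProS_def weight_space_def wf_inst_def intro: arg_cong[where f="measure _"])
  also have "\<dots> = measure (distr ?P (dist J s) (\<lambda>x. x s)) ?U"
    using U by (simp add: measure_distr measurable_component_singleton)
  also have "\<dots> = measure (dist J s) ?U"
    using valid by (subst distr_PiM_component) (auto simp: valid_dist_def)
  finally show ?thesis .
qed

lemma inj_on_restrict_matchings: "inj_on (\<lambda>\<pi>. restrict \<pi> (stu I)) {\<pi>. matching I \<pi>}"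
proof (rule inj_onI, rule ext)
  fix \<pi> \<pi>' s
  assume "\<pi> \<in> {\<pi>. matching I \<pi>}" "\<pi>' \<in> {\<pi>. matching I \<pi>}"
    and "restrict \<pi> (stu I) = restrict \<pi>' (stu I)"
  then show "\<pi> s = \<pi>' s"
    by (cases "s \<in> stu I") (auto simp: matching_def dest: fun_cong[where x = s])
qed

lemma finite_matchings:
  assumes "finite (stu I)" "finite (col I)"
  shows "finite {\<pi>. matching I \<pi>}"
proof (rule finite_imageD[OF _ inj_on_restrict_matchings])
  have "(\<lambda>\<pi>. restrict \<pi> (stu I)) ` {\<pi>. matching I \<pi>} \<subseteq> PiE (stu I) (\<lambda>_. insert None (Some ` col I))"
    by (auto simp: matching_def PiE_def Pi_def)
  then show "finite ((\<lambda>\<pi>. restrict \<pi> (stu I)) ` {\<pi>. matching I \<pi>})"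
    by (rule finite_subset) (use assms in \<open>auto intro: finite_PiE\<close>)
qed

lemma ProS_le_Max_ProS:
  assumes "wf_inst I" "matching I \<pi>"
  shows "ProS \<pi> I \<le> Max ((\<lambda>\<pi>. ProS \<pi> I) ` {\<pi>. matching I \<pi>})"
  using assms finite_matchings[of I] by (intro Max_ge) (auto simp: wf_inst_def)

lemma alpha_optimal_ProS_nonzero:
  assumes "alpha_optimal Alg \<alpha>" "0 < \<alpha>" "wf_inst I"
  shows "ProS (Alg I) I \<noteq> 0"
  using assms by (auto simp: alpha_optimal_def)

(* measure_pmf carries the discrete sigma-algebra, whereas valid_dist asks for the Borel sets. *)
definition dist_of_pmf :: "(real^'f::finite) pmf \<Rightarrow> (real^'f) measure" where
  "dist_of_pmf p = distr (measure_pmf p) borel id"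

lemma wsimplex_in_borel: "wsimplex \<in> sets borel"
  unfolding wsimplex_def by measurable

lemma valid_dist_of_pmf:
  assumes "set_pmf p \<subseteq> wsimplex"
  shows "valid_dist (dist_of_pmf p)"
proof -
  have "AE w in distr (measure_pmf p) borel id. w \<in> wsimplex"
    using assms wsimplex_in_borel by (subst AE_distr_iff) (auto simp: AE_measure_pmf_iff)
  then show ?thesis
    unfolding valid_dist_def dist_of_pmf_def
    by (simp add: prob_space.prob_space_distr prob_space_measure_pmf)
qed

lemma space_dist_of_pmf: "space (dist_of_pmf p) = UNIV"
  by (simp add: dist_of_pmf_def)

lemma measure_dist_of_pmf:
  "A \<in> sets borel \<Longrightarrow> measure (dist_of_pmf p) A = measure_pmf.prob p A"
  by (simp add: dist_of_pmf_def measure_distr)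

definition weight_on :: "'f \<Rightarrow> 'f \<Rightarrow> real \<Rightarrow> real^'f::finite" where
  "weight_on f1 f2 t = axis f1 t + axis f2 (1 - t)"

lemma val_add: "val u (v + w) c = val u v c + val u w c"
  by (simp add: val_def distrib_right sum.distrib)

lemma val_axis: "val u (axis f x) c = x * u f c"
  unfolding val_def axis_def by (simp add: if_distrib[where f = "\<lambda>y. y * _"] cong: if_cong)

lemma val_weight_on: "val u (weight_on f1 f2 t) c = t * u f1 c + (1 - t) * u f2 c"
  by (simp add: weight_on_def val_add val_axis)

lemma weight_on_in_wsimplex: "0 \<le> t \<Longrightarrow> t \<le> 1 \<Longrightarrow> weight_on f1 f2 t \<in> wsimplex"
  by (simp add: wsimplex_def weight_on_def axis_def sum.distrib)

definition compromise_utils :: "'f \<Rightarrow> 'f \<Rightarrow> nat \<Rightarrow> real" where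
  "compromise_utils f1 f c =
     (if c = 2 then 3/4 else if f = f1 then (if c = 1 then 1 else 0) else (if c = 1 then 0 else 1))"

lemma valid_utils_compromise_utils: "valid_utils M (compromise_utils f1)"
  by (simp add: valid_utils_def compromise_utils_def)

lemma val_compromise_utils:
  assumes "f1 \<noteq> f2"
  shows "val (compromise_utils f1) (weight_on f1 f2 t) c = (if c = 1 then t else if c = 2 then 3/4 else 1 - t)"
  using assms by (simp add: val_weight_on compromise_utils_def algebra_simps)

definition polarized_weights :: "'f \<Rightarrow> 'f \<Rightarrow> real \<Rightarrow> (real^'f::finite) pmf" where
  "polarized_weights f1 f2 e =
     pmf_of_list [(weight_on f1 f2 1, (1 - e)/2), (weight_on f1 f2 (1/2), e), (weight_on f1 f2 0, (1 - e)/2)]"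

lemma pmf_of_list_wf_polarized_weights:
  fixes e :: real
  assumes "0 \<le> e" "e \<le> 1"
  shows "pmf_of_list_wf
           [(weight_on f1 f2 1, (1 - e)/2), (weight_on f1 f2 (1/2), e), (weight_on f1 f2 0, (1 - e)/2)]"
  using assms by (intro pmf_of_list_wfI) auto

lemma prob_polarized_weights:
  assumes "0 \<le> e" "e \<le> 1"
  shows "measure_pmf.prob (polarized_weights f1 f2 e) A =
           (if weight_on f1 f2 1 \<in> A then (1 - e)/2 else 0) + (if weight_on f1 f2 (1/2) \<in> A then e else 0)
         + (if weight_on f1 f2 0 \<in> A then (1 - e)/2 else 0)"
  unfolding polarized_weights_def measure_pmf_of_list[OF pmf_of_list_wf_polarized_weights[OF assms]]
  by simp

lemma valid_dist_polarized_weights: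
  assumes "0 \<le> e" "e \<le> 1"
  shows "valid_dist (dist_of_pmf (polarized_weights f1 f2 e))"
proof (rule valid_dist_of_pmf)
  show "set_pmf (polarized_weights f1 f2 e) \<subseteq> wsimplex"
    using set_pmf_of_list[OF pmf_of_list_wf_polarized_weights[OF assms, of f1 f2]]
    by (auto simp: polarized_weights_def weight_on_in_wsimplex)
qed

lemma valid_dist_point_mass: "valid_dist (dist_of_pmf (return_pmf (weight_on f1 f2 (1/2))))"
  by (rule valid_dist_of_pmf) (simp add: weight_on_in_wsimplex)

(* Only student 0 exists; the other entries of dist are fixed so that a misreport of student 0
   stays inside this family of instances. *)
definition compromise_inst :: "'f \<Rightarrow> (real^'f::finite) measure \<Rightarrow> 'f inst" where
  "compromise_inst f1 \<mu> =
     \<lparr>stu = {0}, col = {1, 2, 3}, cap = (\<lambda>_. 1), cpref = (\<lambda>_ _ _. False),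
      util = (\<lambda>_. compromise_utils f1), dist = (\<lambda>_. undefined)(0 := \<mu>)\<rparr>"

lemma misreport_compromise_inst:
  "misreport (compromise_inst f1 \<mu>) 0 (compromise_utils f1) \<mu>' = compromise_inst f1 \<mu>'"
  by (simp add: misreport_def compromise_inst_def fun_upd_idem)

lemma wf_compromise_inst:
  "valid_dist \<mu> \<Longrightarrow> wf_inst (compromise_inst f1 \<mu>)"
  by (simp add: wf_inst_def compromise_inst_def strict_total_on_def valid_utils_compromise_utils)

lemma matching_compromise_inst_iff:
  "matching (compromise_inst f1 \<mu>) \<pi> \<longleftrightarrow>
     (\<forall>s. s \<noteq> 0 \<longrightarrow> \<pi> s = None) \<and> \<pi> 0 \<in> {None, Some 1, Some 2, Some 3}"
proof -
  have "card {s \<in> {0::nat}. \<pi> s = Some c} \<le> 1" for c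
    by (rule order_trans[OF card_mono[of "{0}"]]) auto
  moreover have "(\<forall>c. \<pi> 0 = Some c \<longrightarrow> c \<in> {1, 2, 3}) \<longleftrightarrow> \<pi> 0 \<in> {None, Some 1, Some 2, Some 3}"
    by (cases "\<pi> 0") auto
  ultimately show ?thesis
    unfolding matching_def compromise_inst_def by simp
qed

lemma ProS_compromise_inst:
  assumes "valid_dist \<mu>"
  shows "ProS \<pi> (compromise_inst f1 \<mu>) = measure \<mu> (unblocked (compromise_utils f1) {1, 2, 3} (\<pi> 0))"
proof -
  have "stu (compromise_inst f1 \<mu>) = {0}"
    by (simp add: compromise_inst_def)
  from ProS_single_student[OF wf_compromise_inst[OF assms] this] show ?thesis
    by (simp add: compromise_inst_def)
qed

lemma ProS_point_mass:
  assumes "f1 \<noteq> f2"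
  shows "ProS \<pi> (compromise_inst f1 (dist_of_pmf (return_pmf (weight_on f1 f2 (1/2)))))
           = (if \<pi> 0 = Some 2 then 1 else 0)"
proof -
  have "ProS \<pi> (compromise_inst f1 (dist_of_pmf (return_pmf (weight_on f1 f2 (1/2)))))
          = indicator (unblocked (compromise_utils f1) {1, 2, 3} (\<pi> 0)) (weight_on f1 f2 (1/2))"
    by (simp add: ProS_compromise_inst valid_dist_point_mass measure_dist_of_pmf unblocked_in_borel)
  also have "\<dots> = (if \<pi> 0 = Some 2 then 1 else 0)"
    using assms
    by (cases "\<pi> 0") (auto simp: indicator_def unblocked_def sprefers_def val_compromise_utils)
  finally show ?thesis .
qed

lemma ProS_polarized:
  assumes "0 \<le> e" "e \<le> 1"
  shows "ProS \<pi> (compromise_inst f1 (dist_of_pmf (polarized_weights f1 f2 e)))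
           = measure_pmf.prob (polarized_weights f1 f2 e) (unblocked (compromise_utils f1) {1, 2, 3} (\<pi> 0))"
  using assms
  by (simp add: ProS_compromise_inst valid_dist_polarized_weights measure_dist_of_pmf unblocked_in_borel)

lemma ProS_polarized_compromise:
  assumes "f1 \<noteq> f2" "0 \<le> e" "e \<le> 1" "\<pi> 0 = Some 2"
  shows "ProS \<pi> (compromise_inst f1 (dist_of_pmf (polarized_weights f1 f2 e))) = e"
  using assms
  by (simp add: ProS_polarized prob_polarized_weights unblocked_def sprefers_def val_compromise_utils)

lemma ProS_polarized_extreme:
  assumes "f1 \<noteq> f2" "0 \<le> e" "e \<le> 1" "\<pi> 0 = Some 1"
  shows "ProS \<pi> (compromise_inst f1 (dist_of_pmf (polarized_weights f1 f2 e))) = (1 - e)/2"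
  using assms
  by (simp add: ProS_polarized prob_polarized_weights unblocked_def sprefers_def val_compromise_utils)

lemma prob_polarized_prefers_compromise:
  assumes "f1 \<noteq> f2" "0 < e" "e \<le> 1" "x \<in> {None, Some 1, Some 3}"
  defines "\<mu> \<equiv> dist_of_pmf (polarized_weights f1 f2 e)"
  shows "1/2 < measure \<mu> {w \<in> space \<mu>. sprefers (compromise_utils f1) w (Some 2) x}"
proof -
  have "{w \<in> space \<mu>. sprefers (compromise_utils f1) w (Some 2) x} \<in> sets borel"
    using pred_sprefers by (simp add: \<mu>_def dist_of_pmf_def Measurable.pred_def)
  with assms show ?thesis
    by (auto simp: space_dist_of_pmf measure_dist_of_pmf prob_polarized_weights sprefers_def
        val_compromise_utils field_simps)
qed

lemma ProS_ratio_polarized_compromise: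
  assumes "f1 \<noteq> f2" "0 < e" "e \<le> 1/2" "\<pi> 0 = Some 2"
  defines "I \<equiv> compromise_inst f1 (dist_of_pmf (polarized_weights f1 f2 e))"
  shows "ProS \<pi> I / Max ((\<lambda>\<pi>. ProS \<pi> I) ` {\<pi>. matching I \<pi>}) \<le> 4 * e"
proof -
  let ?M = "Max ((\<lambda>\<pi>. ProS \<pi> I) ` {\<pi>. matching I \<pi>})"
  have wf: "wf_inst I"
    using assms by (simp add: I_def wf_compromise_inst valid_dist_polarized_weights)
  have "(1 - e)/2 = ProS ((\<lambda>_. None)(0 := Some 1)) I"
    using assms by (simp add: I_def ProS_polarized_extreme)
  also have "\<dots> \<le> ?M"
    using wf by (intro ProS_le_Max_ProS) (simp_all add: I_def matching_compromise_inst_iff)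
  finally have M: "(1 - e)/2 \<le> ?M" .
  have "ProS \<pi> I / ?M = e / ?M"
    using assms by (simp add: I_def ProS_polarized_compromise)
  also have "\<dots> \<le> e / ((1 - e)/2)"
    using M assms(2,3) by (intro divide_left_mono mult_pos_pos) auto
  also have "\<dots> \<le> 4 * e"
    using assms by (simp add: field_simps)
  finally show ?thesis .
qed

lemma IC_R_keeps_compromise:
  assumes "IC_R Alg" "matching_algorithm Alg" "f1 \<noteq> f2" "0 < e" "e \<le> 1"
    and "Alg (compromise_inst f1 (dist_of_pmf (return_pmf (weight_on f1 f2 (1/2))))) 0 = Some 2"
  shows "Alg (compromise_inst f1 (dist_of_pmf (polarized_weights f1 f2 e))) 0 = Some 2"
proof (rule ccontr)
  let ?I = "compromise_inst f1 (dist_of_pmf (polarized_weights f1 f2 e))"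
  let ?\<mu> = "dist_of_pmf (return_pmf (weight_on f1 f2 (1/2)))"
  assume "Alg ?I 0 \<noteq> Some 2"
  have wf: "wf_inst ?I"
    using assms by (simp add: wf_compromise_inst valid_dist_polarized_weights)
  then have "matching ?I (Alg ?I)"
    using assms(2) by (simp add: matching_algorithm_def)
  with \<open>Alg ?I 0 \<noteq> Some 2\<close> have "Alg ?I 0 \<in> {None, Some 1, Some 3}"
    by (auto simp: matching_compromise_inst_iff)
  then have "1/2 < measure (dist_of_pmf (polarized_weights f1 f2 e))
                      {w \<in> space (dist_of_pmf (polarized_weights f1 f2 e)).
                         sprefers (compromise_utils f1) w (Some 2) (Alg ?I 0)}"
    by (rule prob_polarized_prefers_compromise[OF assms(3-5)])
  moreover have "\<not> 1/2 < measure (dist ?I 0) {w \<in> space (dist ?I 0).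
                      sprefers (util ?I 0) w (Alg (misreport ?I 0 (compromise_utils f1) ?\<mu>) 0) (Alg ?I 0)}"
    using assms(1) wf valid_dist_point_mass[of f1 f2] unfolding IC_R_def
    by (auto simp: compromise_inst_def valid_utils_compromise_utils)
  moreover have "dist ?I 0 = dist_of_pmf (polarized_weights f1 f2 e)" "util ?I 0 = compromise_utils f1"
    by (simp_all add: compromise_inst_def)
  ultimately show False
    using assms(6) by (simp add: misreport_compromise_inst)
qed

theorem theorem2:
  assumes "CARD('f::finite) = 2"
  shows "\<not> (\<exists>(Alg :: 'f inst \<Rightarrow> (nat \<Rightarrow> nat option)) (\<alpha>::real).
             \<alpha> > 0 \<and> matching_algorithm Alg \<and> IC_R Alg \<and> alpha_optimal Alg \<alpha>)"
proof (intro notI, elim exE conjE)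
  fix Alg :: "'f inst \<Rightarrow> nat \<Rightarrow> nat option" and \<alpha> :: real
  assume "0 < \<alpha>" "matching_algorithm Alg" "IC_R Alg" and opt: "alpha_optimal Alg \<alpha>"
  obtain f1 f2 :: 'f where "f1 \<noteq> f2"
    using assms card_2_iff by metis
  define e where "e = min (\<alpha>/8) (1/2)"
  have e: "0 < e" "e \<le> 1/2" "8 * e \<le> \<alpha>"
    using \<open>0 < \<alpha>\<close> by (auto simp: e_def)
  let ?I = "compromise_inst f1 (dist_of_pmf (polarized_weights f1 f2 e))"
  let ?I' = "compromise_inst f1 (dist_of_pmf (return_pmf (weight_on f1 f2 (1/2))))"
  have "ProS (Alg ?I') ?I' \<noteq> 0"
    using opt \<open>0 < \<alpha>\<close> valid_dist_point_mass by (intro alpha_optimal_ProS_nonzero wf_compromise_inst)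
  then have "Alg ?I' 0 = Some 2"
    using \<open>f1 \<noteq> f2\<close> by (simp add: ProS_point_mass split: if_splits)
  then have "Alg ?I 0 = Some 2"
    using e by (intro IC_R_keeps_compromise[OF \<open>IC_R Alg\<close> \<open>matching_algorithm Alg\<close> \<open>f1 \<noteq> f2\<close>]) auto
  then have "ProS (Alg ?I) ?I / Max ((\<lambda>\<pi>. ProS \<pi> ?I) ` {\<pi>. matching ?I \<pi>}) \<le> 4 * e"
    using ProS_ratio_polarized_compromise \<open>f1 \<noteq> f2\<close> e by simp
  moreover have "wf_inst ?I"
    using e by (intro wf_compromise_inst valid_dist_polarized_weights) auto
  then have "\<alpha> \<le> ProS (Alg ?I) ?I / Max ((\<lambda>\<pi>. ProS \<pi> ?I) ` {\<pi>. matching ?I \<pi>})"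
    using opt by (simp add: alpha_optimal_def)
  ultimately show False
    using e \<open>0 < \<alpha>\<close> by linarith
qed

end
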